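(* Let $M$ be a magma satisfying $(xy)z = xx$ and $x(yz) = xy$ for all $x,y,z\in M$. Then $M$ satisfies $xy = xz$ and $(xy)z = xy$ for all $x,y,z\in M$ if and only if $M$ avoids the magma $E$ on $\{0,1,2,3\}$ with Cayley table \[ \begin{array}{c|cccc} E & 0 & 1 & 2 & 3 \\ \hline 0 & 2 & 3 & 2 & 2 \\ 1 & 1 & 1 & 1 & 1 \\ 2 & 2 & 2 & 2 & 2 \\ 3 & 2 & 2 & 2 & 2 \end{array}. \]
   Context: A magma is a nonempty set with a binary operation, written by juxtaposition. A magma $M$ avoids a magma $F$ if no submagma of $M$ is isomorphic to $F$. In the Cayley table, the entry in row $i$, column $j$ is $i\cdot j$. *)

theory Defs
  imports Main
begin

definition magma :: "'a set \<Rightarrow> ('a \<Rightarrow> 'a \<Rightarrow> 'a) \<Rightarrow> bool" where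
  "magma M f \<longleftrightarrow> M \<noteq> {} \<and> (\<forall>x\<in>M. \<forall>y\<in>M. f x y \<in> M)"

definition avoids ::
  "'a set \<Rightarrow> ('a \<Rightarrow> 'a \<Rightarrow> 'a) \<Rightarrow> 'b set \<Rightarrow> ('b \<Rightarrow> 'b \<Rightarrow> 'b) \<Rightarrow> bool" where
  "avoids M f A g \<longleftrightarrow>
     \<not> (\<exists>S. S \<subseteq> M \<and> S \<noteq> {} \<and> (\<forall>x\<in>S. \<forall>y\<in>S. f x y \<in> S) \<and>
           (\<exists>h. bij_betw h A S \<and> (\<forall>x\<in>A. \<forall>y\<in>A. h (g x y) = f (h x) (h y))))"

text \<open>The magma E on {0,1,2,3}; row i, column j holds i*j.\<close>
definition E_carrier :: "nat set" where "E_carrier = {0,1,2,3}"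

definition E_op :: "nat \<Rightarrow> nat \<Rightarrow> nat" where
  "E_op x y = (if x = 0 then (if y = 1 then 3 else 2)
               else if x = 1 then 1 else 2)"

end

theory Submission
  imports Defs
begin

text \<open>Under the law (xy)z = xx, the law (xy)z = xy says exactly that every left translation
  is constant, xy = xx. If this fails at a, b, then the four elements a, bb, aa, ab are
  pairwise distinct and, sent to 0, 1, 2, 3, form a copy of E: the laws force every product
  except a(bb) = ab to collapse to aa or to the left factor. Conversely no left-constant magma
  contains E, since there 0 \<cdot> 1 = 3 differs from 0 \<cdot> 0 = 2.\<close>

definition embeds :: "'a set \<Rightarrow> ('a \<Rightarrow> 'a \<Rightarrow> 'a) \<Rightarrow> 'b set \<Rightarrow> ('b \<Rightarrow> 'b \<Rightarrow> 'b) \<Rightarrow> bool" where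
  "embeds M f A g \<longleftrightarrow>
     (\<exists>h. inj_on h A \<and> h ` A \<subseteq> M \<and> (\<forall>x\<in>A. \<forall>y\<in>A. h (g x y) = f (h x) (h y)))"

lemma avoids_iff_not_embeds:
  assumes "magma A g"
  shows "avoids M f A g \<longleftrightarrow> \<not> embeds M f A g"
proof -
  have "(\<exists>S. S \<subseteq> M \<and> S \<noteq> {} \<and> (\<forall>x\<in>S. \<forall>y\<in>S. f x y \<in> S) \<and>
           (\<exists>h. bij_betw h A S \<and> (\<forall>x\<in>A. \<forall>y\<in>A. h (g x y) = f (h x) (h y))))
        \<longleftrightarrow> embeds M f A g"
  proof
    assume "embeds M f A g"
    then obtain h where inj: "inj_on h A" and img: "h ` A \<subseteq> M"
      and hom: "\<forall>x\<in>A. \<forall>y\<in>A. h (g x y) = f (h x) (h y)"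
      unfolding embeds_def by blast
    have "\<forall>x\<in>h ` A. \<forall>y\<in>h ` A. f x y \<in> h ` A"
      using hom assms by (force simp: magma_def)
    moreover have "h ` A \<noteq> {}"
      using assms by (simp add: magma_def)
    ultimately show "\<exists>S. S \<subseteq> M \<and> S \<noteq> {} \<and> (\<forall>x\<in>S. \<forall>y\<in>S. f x y \<in> S) \<and>
           (\<exists>h. bij_betw h A S \<and> (\<forall>x\<in>A. \<forall>y\<in>A. h (g x y) = f (h x) (h y)))"
      using inj img hom by (metis inj_on_imp_bij_betw)
  qed (auto simp: embeds_def bij_betw_def)
  then show ?thesis
    unfolding avoids_def by blast
qed

lemma magma_E: "magma E_carrier E_op"
  by (simp add: magma_def E_carrier_def E_op_def)

lemma not_embeds_E_if_left_constant:
  assumes "\<forall>x\<in>M. \<forall>y\<in>M. f x y = f x x"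
  shows "\<not> embeds M f E_carrier E_op"
proof
  assume "embeds M f E_carrier E_op"
  then obtain h where inj: "inj_on h E_carrier" and img: "h ` E_carrier \<subseteq> M"
    and hom: "\<forall>x\<in>E_carrier. \<forall>y\<in>E_carrier. h (E_op x y) = f (h x) (h y)"
    unfolding embeds_def by blast
  have "h 3 = f (h 0) (h 1)"
    using hom by (simp add: E_carrier_def E_op_def)
  also have "\<dots> = f (h 0) (h 0)"
    using assms img unfolding E_carrier_def by blast
  also have "\<dots> = h 2"
    using hom by (simp add: E_carrier_def E_op_def)
  finally show False
    using inj by (simp add: inj_on_def E_carrier_def)
qed

locale collapsing_magma =
  fixes M :: "'a set" and f :: "'a \<Rightarrow> 'a \<Rightarrow> 'a"
  assumes closed: "x \<in> M \<Longrightarrow> y \<in> M \<Longrightarrow> f x y \<in> M"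
    and mul_mul_left: "x \<in> M \<Longrightarrow> y \<in> M \<Longrightarrow> z \<in> M \<Longrightarrow> f (f x y) z = f x x"
    and mul_mul_right: "x \<in> M \<Longrightarrow> y \<in> M \<Longrightarrow> z \<in> M \<Longrightarrow> f x (f y z) = f x y"
begin

lemma left_laws_iff_left_constant:
  "((\<forall>x\<in>M. \<forall>y\<in>M. \<forall>z\<in>M. f x y = f x z) \<and> (\<forall>x\<in>M. \<forall>y\<in>M. \<forall>z\<in>M. f (f x y) z = f x y))
   \<longleftrightarrow> (\<forall>x\<in>M. \<forall>y\<in>M. f x y = f x x)"
proof
  assume "(\<forall>x\<in>M. \<forall>y\<in>M. \<forall>z\<in>M. f x y = f x z) \<and> (\<forall>x\<in>M. \<forall>y\<in>M. \<forall>z\<in>M. f (f x y) z = f x y)"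
  then show "\<forall>x\<in>M. \<forall>y\<in>M. f x y = f x x"
    using mul_mul_left by metis
next
  assume const: "\<forall>x\<in>M. \<forall>y\<in>M. f x y = f x x"
  have "f x y = f x z" if "x \<in> M" "y \<in> M" "z \<in> M" for x y z
    using const that by metis
  moreover have "f (f x y) z = f x y" if "x \<in> M" "y \<in> M" "z \<in> M" for x y z
    using const mul_mul_left that by metis
  ultimately show "(\<forall>x\<in>M. \<forall>y\<in>M. \<forall>z\<in>M. f x y = f x z) \<and> (\<forall>x\<in>M. \<forall>y\<in>M. \<forall>z\<in>M. f (f x y) z = f x y)"
    by blast
qed

lemma distinct_E_witness:
  assumes a: "a \<in> M" and b: "b \<in> M" and ne: "f a b \<noteq> f a a"
  shows "distinct [a, f b b, f a a, f a b]"
proof -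
  have "a \<noteq> f a a"
    using mul_mul_left [OF a a b] ne by metis
  moreover have a_ab: "a \<noteq> f a b"
    using mul_mul_left [OF a b b] ne by metis
  moreover have "a \<noteq> f b b"
    using mul_mul_left [OF b b b] a_ab by metis
  moreover have bb_aa: "f b b \<noteq> f a a"
    using mul_mul_right [OF a b b] mul_mul_right [OF a a a] ne by metis
  moreover have "f b b \<noteq> f a b"
    using mul_mul_left [OF b b b] mul_mul_left [OF a b b] bb_aa by metis
  ultimately show ?thesis
    using ne by auto
qed

lemma embeds_E_if_not_left_constant:
  assumes a: "a \<in> M" and b: "b \<in> M" and ne: "f a b \<noteq> f a a"
  shows "embeds M f E_carrier E_op"
proof -
  define h :: "nat \<Rightarrow> 'a" where "h = (!) [a, f b b, f a a, f a b]"
  have "inj_on h E_carrier"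
    using distinct_E_witness [OF assms]
    by (auto simp: inj_on_def h_def E_carrier_def nth_eq_iff_index_eq)
  moreover have "h ` E_carrier \<subseteq> M"
    using a b by (auto simp: h_def E_carrier_def closed)
  moreover have "\<forall>x\<in>E_carrier. \<forall>y\<in>E_carrier. h (E_op x y) = f (h x) (h y)"
    using a b closed
    by (auto simp: h_def E_carrier_def E_op_def mul_mul_left mul_mul_right)
  ultimately show ?thesis
    unfolding embeds_def by blast
qed

lemma left_constant_iff_not_embeds_E:
  "(\<forall>x\<in>M. \<forall>y\<in>M. f x y = f x x) \<longleftrightarrow> \<not> embeds M f E_carrier E_op"
  using not_embeds_E_if_left_constant embeds_E_if_not_left_constant by blast

end

theorem mainTheorem12:
  fixes M :: "'a set" and f :: "'a \<Rightarrow> 'a \<Rightarrow> 'a"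
  assumes "magma M f"
    and "\<forall>x\<in>M. \<forall>y\<in>M. \<forall>z\<in>M. f (f x y) z = f x x"
    and "\<forall>x\<in>M. \<forall>y\<in>M. \<forall>z\<in>M. f x (f y z) = f x y"
  shows "((\<forall>x\<in>M. \<forall>y\<in>M. \<forall>z\<in>M. f x y = f x z) \<and>
          (\<forall>x\<in>M. \<forall>y\<in>M. \<forall>z\<in>M. f (f x y) z = f x y))
         \<longleftrightarrow> avoids M f E_carrier E_op"
proof -
  interpret collapsing_magma M f
    using assms by unfold_locales (auto simp: magma_def)
  show ?thesis
    using left_laws_iff_left_constant left_constant_iff_not_embeds_E
      avoids_iff_not_embeds [OF magma_E] by blast
qed

end
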